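(* Let $\mathcal{P}$ be a convex polytope in $\mathbb{R}^n$ symmetric about the origin with nonempty interior, and let $G_{\mathcal{P}}$ be an induced subgraph of $G(\mathbb{R}^n,\Vert\cdot\Vert_{\mathcal{P}})$ with vertex set $V$. Assume there is a graph $\tilde G$ with vertex set $V$ such that for all $x,y\in V$, $\tilde d(x,y)=2$ implies $\Vert x-y\Vert_{\mathcal{P}}=1$. Let $A\subset V$ avoid polytope distance $1$ (i.e. $\Vert x-y\Vert_{\mathcal{P}}\neq1$ for all $x,y\in A$). Then $A$ can be written as a union $A=\bigcup_{C\in\mathcal{C}}C$ of cliques of $\tilde G$ such that $N[C]\cap N[C']=\emptyset$ for all distinct $C,C'\in\mathcal{C}$.
   Context: $\Vert x\Vert_{\mathcal{P}}=\inf\{\lambda\geq0:x\in\lambda\mathcal{P}\}$. $G(\mathbb{R}^n,\Vert\cdot\Vert)$ is the graph on $\mathbb{R}^n$ with $x,y$ adjacent iff $\Vert x-y\Vert=1$. $\tilde d$ denotes graph distance in $\tilde G$. A clique of $\tilde G$ is a set $C\subset V$ any two distinct elements of which are adjacent in $\tilde G$. For $C\subset V$, its closed neighborhood is $N[C]=\{v\in V:\tilde d(v,C)\leq1\}$. *)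

theory Defs
  imports "HOL-Analysis.Analysis" "HOL-Library.Extended_Nat"
begin

definition poly_norm :: "('a::real_vector) set \<Rightarrow> 'a \<Rightarrow> real" where
  "poly_norm P x = Inf {l::real. l \<ge> 0 \<and> x \<in> (\<lambda>p. l *\<^sub>R p) ` P}"

definition simple_graph :: "'a set \<Rightarrow> ('a \<Rightarrow> 'a \<Rightarrow> bool) \<Rightarrow> bool" where
  "simple_graph V E \<longleftrightarrow> (\<forall>x y. E x y \<longrightarrow> x \<in> V \<and> y \<in> V) \<and>
     (\<forall>x y. E x y \<longrightarrow> E y x) \<and> (\<forall>x. \<not> E x x)"

definition gdist :: "('a \<Rightarrow> 'a \<Rightarrow> bool) \<Rightarrow> 'a \<Rightarrow> 'a \<Rightarrow> enat" where
  "gdist E x y = (if \<exists>n. (E ^^ n) x y then enat (LEAST n. (E ^^ n) x y) else \<infinity>)"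

definition is_clique :: "'a set \<Rightarrow> ('a \<Rightarrow> 'a \<Rightarrow> bool) \<Rightarrow> 'a set \<Rightarrow> bool" where
  "is_clique V E C \<longleftrightarrow> C \<subseteq> V \<and> (\<forall>x\<in>C. \<forall>y\<in>C. x \<noteq> y \<longrightarrow> E x y)"

definition closed_nbhd :: "'a set \<Rightarrow> ('a \<Rightarrow> 'a \<Rightarrow> bool) \<Rightarrow> 'a set \<Rightarrow> 'a set" where
  "closed_nbhd V E C = {v \<in> V. \<exists>c\<in>C. gdist E v c \<le> 1}"

end

theory Submission
  imports Defs
begin

text \<open>Only the combinatorics of the graph matters: by the hypothesis on the polytope norm, no two
  vertices of A are at graph distance 2. Hence any two vertices of A with a common closed
  neighbour are equal or adjacent, so "equal or adjacent" is an equivalence relation on A. Its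
  classes are cliques, and two vertices in different classes have no common closed neighbour,
  i.e. the closed neighbourhoods of different classes are disjoint.\<close>

lemma gdist_le_1_iff: "gdist E x y \<le> 1 \<longleftrightarrow> x = y \<or> E x y"
proof
  assume le: "gdist E x y \<le> 1"
  then have ex: "\<exists>n. (E ^^ n) x y"
    unfolding gdist_def by (cases "\<exists>n. (E ^^ n) x y") auto
  define m where "m = (LEAST n. (E ^^ n) x y)"
  have "(E ^^ m) x y" unfolding m_def using ex by (metis LeastI)
  moreover have "m \<le> 1" using le ex unfolding gdist_def m_def by (simp add: one_enat_def)
  ultimately show "x = y \<or> E x y" by (cases m) auto
next
  assume "x = y \<or> E x y"
  then have walk: "(E ^^ (if x = y then 0 else 1)) x y" by auto
  then have "(LEAST n. (E ^^ n) x y) \<le> 1"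
    by (metis (mono_tags, lifting) Least_le le_zero_eq zero_le_one)
  then show "gdist E x y \<le> 1" using walk unfolding gdist_def by (auto simp: one_enat_def)
qed

lemma gdist_eq_2:
  assumes "x \<noteq> y" "\<not> E x y" "E x v" "E v y"
  shows "gdist E x y = 2"
proof -
  have walk: "(E ^^ 2) x y" using assms(3,4) by (auto simp: numeral_2_eq_2)
  have "(LEAST n. (E ^^ n) x y) = 2"
  proof (rule Least_equality)
    fix m assume "(E ^^ m) x y"
    then show "2 \<le> m" using assms(1,2) by (cases m; cases "m - 1"; auto)
  qed (rule walk)
  then show ?thesis using walk unfolding gdist_def by (auto simp: numeral_eq_enat)
qed

lemma common_closed_neighbour_adjacent:
  assumes "symp E" and no_dist_2: "\<forall>x\<in>A. \<forall>y\<in>A. gdist E x y \<noteq> 2"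
    and "x \<in> A" "y \<in> A" "gdist E v x \<le> 1" "gdist E v y \<le> 1"
  shows "gdist E x y \<le> 1"
proof (rule ccontr)
  assume "\<not> gdist E x y \<le> 1"
  moreover have "E x v" "E v y" if "\<not> (x = y \<or> E x y)"
    using that assms(1,5,6) by (auto simp: gdist_le_1_iff dest: sympD)
  ultimately have "gdist E x y = 2" by (auto simp: gdist_le_1_iff intro: gdist_eq_2)
  then show False using no_dist_2 \<open>x \<in> A\<close> \<open>y \<in> A\<close> by blast
qed

theorem clique_partition_of_distance_2_free_set:
  assumes "symp E" "A \<subseteq> V" and no_dist_2: "\<forall>x\<in>A. \<forall>y\<in>A. gdist E x y \<noteq> 2"
  shows "\<exists>\<C>. (\<forall>C\<in>\<C>. is_clique V E C) \<and> A = \<Union>\<C> \<and>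
           (\<forall>C\<in>\<C>. \<forall>C'\<in>\<C>. C \<noteq> C' \<longrightarrow> closed_nbhd V E C \<inter> closed_nbhd V E C' = {})"
proof -
  let ?R = "\<lambda>x y. gdist E x y \<le> 1"
  have R_sym: "?R y x" if "?R x y" for x y
    using that \<open>symp E\<close> by (auto simp: gdist_le_1_iff dest: sympD)
  have R_common: "?R x y" if "x \<in> A" "y \<in> A" "?R v x" "?R v y" for x y v
    using common_closed_neighbour_adjacent[OF \<open>symp E\<close> no_dist_2 that] .
  define cls where "cls x = {y \<in> A. ?R x y}" for x
  have cls_eq: "cls x = cls x'" if "x \<in> A" "x' \<in> A" "?R x x'" for x x'
    unfolding cls_def using that R_common R_sym by blast
  define \<C> where "\<C> = cls ` A"
  have "is_clique V E C" if "C \<in> \<C>" for C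
  proof -
    obtain x where "x \<in> A" "C = cls x" using \<open>C \<in> \<C>\<close> unfolding \<C>_def by blast
    then have "C \<subseteq> A" unfolding cls_def by blast
    moreover have "?R y z" if "y \<in> C" "z \<in> C" for y z
      using that \<open>x \<in> A\<close> \<open>C = cls x\<close> R_common unfolding cls_def by blast
    ultimately show ?thesis
      using \<open>A \<subseteq> V\<close> unfolding is_clique_def by (auto simp: gdist_le_1_iff)
  qed
  moreover have "A = \<Union>\<C>" unfolding \<C>_def cls_def by (auto simp: gdist_le_1_iff)
  moreover have "closed_nbhd V E C \<inter> closed_nbhd V E C' = {}"
    if classes: "C \<in> \<C>" "C' \<in> \<C>" and "C \<noteq> C'" for C C'
  proof (rule ccontr)
    obtain x x' where x: "x \<in> A" "C = cls x" "x' \<in> A" "C' = cls x'"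
      using classes unfolding \<C>_def by blast
    assume "closed_nbhd V E C \<inter> closed_nbhd V E C' \<noteq> {}"
    then obtain v c c' where c: "c \<in> C" "c' \<in> C'" "?R v c" "?R v c'"
      unfolding closed_nbhd_def by blast
    then have "c \<in> A" "c' \<in> A" "?R c x" "?R c' x'"
      using x R_sym unfolding cls_def by auto
    moreover have "?R c c'" using R_common \<open>c \<in> A\<close> \<open>c' \<in> A\<close> c(3,4) .
    ultimately have "?R x x'" using x R_common R_sym by meson
    then show False using cls_eq x \<open>C \<noteq> C'\<close> by blast
  qed
  ultimately show ?thesis by blast
qed

theorem lemma4:
  fixes P :: "(real^'n) set" and V A :: "(real^'n) set"
    and E :: "real^'n \<Rightarrow> real^'n \<Rightarrow> bool"
  assumes "polytope P" and "convex P"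
    and "\<forall>x\<in>P. - x \<in> P"
    and "interior P \<noteq> {}"
    and "simple_graph V E"
    and "\<forall>x\<in>V. \<forall>y\<in>V. gdist E x y = 2 \<longrightarrow> poly_norm P (x - y) = 1"
    and "A \<subseteq> V"
    and "\<forall>x\<in>A. \<forall>y\<in>A. poly_norm P (x - y) \<noteq> 1"
  shows "\<exists>\<C>::(real^'n) set set. (\<forall>C\<in>\<C>. is_clique V E C) \<and> A = \<Union>\<C> \<and>
           (\<forall>C\<in>\<C>. \<forall>C'\<in>\<C>. C \<noteq> C' \<longrightarrow> closed_nbhd V E C \<inter> closed_nbhd V E C' = {})"
proof (rule clique_partition_of_distance_2_free_set)
  show "symp E" using \<open>simple_graph V E\<close> unfolding simple_graph_def by (simp add: sympI)
  show "\<forall>x\<in>A. \<forall>y\<in>A. gdist E x y \<noteq> 2" using assms(6-8) by blast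
qed (rule \<open>A \<subseteq> V\<close>)

end
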